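(* Assume the Setup and Matrix Notation below. For all $i,j\in I$ let $Z_{ij}=\begin{pmatrix}P_{ij}&Q_{ij}\\R_{ij}&S_{ij}\end{pmatrix}$ be $r\times r$ matrices over $\mathcal O_X(U_i\cap U_j)$ (blocks of sizes $(r-2)\times(r-2)$, $(r-2)\times2$, $2\times(r-2)$, $2\times2$) with $M_i=Z_{ij}M_j$ and $S_{ij}=(-1)^{t_j}s_{jt_i}A_{ij}$. Then for any $i,j,k\in I$ there exist regular functions $\beta_{ijk1},\dots,\beta_{ijk,r-1}$ on $U_i\cap U_j\cap U_k$ such that $Z_{ik}-Z_{ij}Z_{jk}=(0\ \ B_{ijk})$, where $0$ is the zero $r\times(r-2)$ matrix and $$B_{ijk}=\begin{pmatrix}Q_{ik}-P_{ij}Q_{jk}-Q_{ij}S_{jk}\\ S_{ik}-R_{ij}Q_{jk}-S_{ij}S_{jk}\end{pmatrix}=\begin{pmatrix}\beta_{ijk1}\\ \vdots\\ \widehat{\beta_{ijkt_i}}\\ \vdots\\ \beta_{ijk,r-1}\\ \beta_{ijkt_i}f_i\\ \beta_{ijkt_i}g_i\end{pmatrix}(g_k,\ -f_k),$$ the hat meaning that the entry $\beta_{ijkt_i}$ is omitted from the first $r-2$ entries.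
   Context: Setup. $k$ is an algebraically closed field, $X$ a smooth irreducible algebraic variety over $k$, $Y\subset X$ a local complete intersection subscheme of codimension two with ideal sheaf $\mathcal J$ and normal bundle $N$, $L$ a line bundle on $X$, $r\ge 2$ an integer, and $s_1,\dots,s_{r-1}$ global sections generating $\bigwedge^2N\otimes L^*|_Y$. A bar denotes the class modulo the ideal of $Y$. $\{U_i\}_{i\in I}$ is a cover of $X$ by affine open sets such that: (a) $L|_{U_i}$ is trivial, with transition functions $h_{ij}\in\mathcal O_X(U_i\cap U_j)^\times$, $h_{ij}h_{jk}=h_{ik}$; (b) $f_i,g_i\in\mathcal O_X(U_i)$ generate $\mathcal J(U_i)$ (with $f_i=1,g_i=0$ if $Y\cap U_i=\emptyset$), and for every affine open $V\subseteq U_i$ and $u,v\in\mathcal O_X(V)$ with $uf_i=vg_i$ there is $w\in\mathcal O_X(V)$ with $u=wg_i$, $v=wf_i$; (c) for all $i,j$, $A_{ij}$ is a $2\times2$ matrix over $\mathcal O_X(U_i\cap U_j)$ with $(f_i,g_i)^T=A_{ij}(f_j,g_j)^T$; (d) $s_{it}\in\mathcal O_X(U_i)$ ($t=1,\dots,r-1$) satisfy $\bar s_{it}=\frac{\det\bar A_{ij}}{\bar h_{ij}}\bar s_{jt}$ on $Y\cap U_i\cap U_j$ (they represent $s_t$ locally); (e) there are indices $t_i\in\{1,\dots,r-1\}$ with $s_{it_i}=(-1)^{t_i}$, and for all $i,j$ the function $s_{jt_i}$ is a unit on $U_i\cap U_j$ and $\det A_{ij}=(-1)^{t_i}h_{ij}/s_{jt_i}$.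 Matrix Notation. $\Delta_t$ is the identity matrix (size clear from context) with its $t$-th row removed and $\Delta'_t$ its transpose; thus $\Delta_tM$ is $M$ without its $t$-th row and $M\Delta'_t$ is $M$ without its $t$-th column. $\mathbf s_i=(s_{i1},\dots,s_{i,r-1})^T$. $T'_i$ is the $(r-1)\times(r-1)$ matrix equal to the identity except for its $t_i$-th column, whose $t_i$-th entry is $1$ and whose $t$-th entry is $-(-1)^{t_i}s_{it}$ for $t\ne t_i$. $T''_i$ is the $2\times(r-1)$ matrix whose $t_i$-th column is $(f_i,g_i)^T$ and whose other columns are zero. $M_i=\begin{pmatrix}\Delta_{t_i}T'_i\\ T''_i\end{pmatrix}$ (an $r\times(r-1)$ matrix). $P_{ij}=\Delta_{t_i}T'_i\Delta'_{t_j}$. *)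

theory Defs
  imports "Jordan_Normal_Form.Matrix" "Jordan_Normal_Form.Determinant"
    "HOL-Computational_Algebra.Polynomial"
begin

text \<open>X is a variety over the field k, so regular functions on an open set are
  determined by their values at points; they are modelled as functions
  'x => 'k considered on the open set.  Aff is the family of affine open
  subsets of X and Reg V is the k-algebra of regular functions on V.
  The axioms below are properties of every (separated) variety: regular
  functions on an affine open form a k-algebra containing the constants,
  they restrict to smaller affine opens, and intersections of affine opens
  are affine.\<close>

definition regular_structure ::
  "'x set set \<Rightarrow> ('x set \<Rightarrow> ('x \<Rightarrow> 'k::field) set) \<Rightarrow> bool" where
  "regular_structure Aff Reg \<longleftrightarrow>
     (\<forall>V\<in>Aff. \<forall>W\<in>Aff. V \<inter> W \<in> Aff) \<and>
     (\<forall>V\<in>Aff. \<forall>c. (\<lambda>_. c) \<in> Reg V) \<and>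
     (\<forall>V\<in>Aff. \<forall>u\<in>Reg V. \<forall>v\<in>Reg V. (\<lambda>x. u x + v x) \<in> Reg V) \<and>
     (\<forall>V\<in>Aff. \<forall>u\<in>Reg V. \<forall>v\<in>Reg V. (\<lambda>x. u x * v x) \<in> Reg V) \<and>
     (\<forall>V\<in>Aff. \<forall>u\<in>Reg V. (\<lambda>x. - u x) \<in> Reg V) \<and>
     (\<forall>V\<in>Aff. \<forall>u\<in>Reg V. \<forall>u'. (\<forall>x\<in>V. u' x = u x) \<longrightarrow> u' \<in> Reg V) \<and>
     (\<forall>V\<in>Aff. \<forall>W\<in>Aff. V \<subseteq> W \<longrightarrow> (\<forall>u\<in>Reg W. u \<in> Reg V))"

definition reg_unit :: "('x set \<Rightarrow> ('x \<Rightarrow> 'k::field) set) \<Rightarrow> 'x set \<Rightarrow> ('x \<Rightarrow> 'k) \<Rightarrow> bool" where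
  "reg_unit Reg V u \<longleftrightarrow> u \<in> Reg V \<and> (\<exists>w\<in>Reg V. \<forall>x\<in>V. u x * w x = 1)"

definition reg_mat ::
  "('x set \<Rightarrow> ('x \<Rightarrow> 'k::field) set) \<Rightarrow> 'x set \<Rightarrow> nat \<Rightarrow> nat \<Rightarrow> ('x \<Rightarrow> 'k mat) \<Rightarrow> bool" where
  "reg_mat Reg V m n A \<longleftrightarrow> (\<forall>x\<in>V. A x \<in> carrier_mat m n) \<and>
     (\<forall>a<m. \<forall>b<n. (\<lambda>x. A x $$ (a, b)) \<in> Reg V)"

section \<open>Matrix notation (indices t are 1-based as in the paper)\<close>

text \<open>Delta n t: the n x n identity matrix with its t-th row removed.\<close>
definition Delta :: "nat \<Rightarrow> nat \<Rightarrow> 'a::{zero,one} mat" where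
  "Delta n t = mat (n - 1) n (\<lambda>(a, b). if b = (if a + 1 < t then a else a + 1) then 1 else 0)"

definition Delta' :: "nat \<Rightarrow> nat \<Rightarrow> 'a::{zero,one} mat" where
  "Delta' n t = transpose_mat (Delta n t)"

definition append_cols :: "'a::zero mat \<Rightarrow> 'a mat \<Rightarrow> 'a mat" where
  "append_cols A B = four_block_mat A B (0\<^sub>m 0 (dim_col A)) (0\<^sub>m 0 (dim_col B))"

definition col2 :: "'a \<Rightarrow> 'a \<Rightarrow> 'a mat" where
  "col2 a b = mat 2 1 (\<lambda>(p, _). if p = 0 then a else b)"
definition row2 :: "'a \<Rightarrow> 'a \<Rightarrow> 'a mat" where
  "row2 a b = mat 1 2 (\<lambda>(_, q). if q = 0 then a else b)"

text \<open>Column vector (v_1,...,v_n)^T from a 1-based sequence v.\<close>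
definition colvec :: "nat \<Rightarrow> (nat \<Rightarrow> 'a) \<Rightarrow> 'a mat" where
  "colvec n v = mat n 1 (\<lambda>(p, _). v (p + 1))"

text \<open>T'_i (size (r-1)x(r-1)), given r, t_i and the values s_{i,1..r-1}:
  identity except its t_i-th column, whose t_i-th entry is 1 and whose
  t-th entry is -(-1)^{t_i} s_{it} for t \<noteq> t_i.\<close>
definition Tprime :: "nat \<Rightarrow> nat \<Rightarrow> (nat \<Rightarrow> 'a::comm_ring_1) \<Rightarrow> 'a mat" where
  "Tprime r ti s = mat (r - 1) (r - 1) (\<lambda>(a, b).
      if b + 1 = ti then (if a + 1 = ti then 1 else - ((-1) ^ ti * s (a + 1)))
      else (if a = b then 1 else 0))"

definition Tsecond :: "nat \<Rightarrow> nat \<Rightarrow> 'a::zero \<Rightarrow> 'a \<Rightarrow> 'a mat" where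
  "Tsecond r ti f g = mat 2 (r - 1) (\<lambda>(a, b).
      if b + 1 = ti then (if a = 0 then f else g) else 0)"

definition Mmat :: "nat \<Rightarrow> nat \<Rightarrow> (nat \<Rightarrow> 'a::comm_ring_1) \<Rightarrow> 'a \<Rightarrow> 'a \<Rightarrow> 'a mat" where
  "Mmat r ti s f g = (Delta (r - 1) ti * Tprime r ti s) @\<^sub>r Tsecond r ti f g"

end

theory Submission
  imports Defs
begin

text \<open>
  The columns of M_k other than the t_k-th are the first r - 2 standard basis vectors, and
  Z_ik M_k = M_i = Z_ij Z_jk M_k. Hence the defect D = Z_ik - Z_ij Z_jk kills M_k: its first r - 2
  columns vanish, and every row (b, b') of the remaining block B satisfies b f_k + b' g_k = 0, so
  it is c (g_k, -f_k) because (f_k, g_k) is a regular sequence.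
  For the last two rows, the row vector (g_i, -f_i) kills the block R_ij (read off from
  M_i = Z_ij M_j) and turns A_ij into det A_ij (g_j, -f_j). Together with
  S_ij = (-1)^t_j s_(j t_i) A_ij, the formula for det A_ij and the cocycle identity of h, this gives
  (g_i c_(r-1) - f_i c_r) (g_k, -f_k) = 0, hence g_i c_(r-1) = f_i c_r, and regularity of
  (f_i, g_i) yields (c_(r-1), c_r) = beta_(t_i) (f_i, g_i).
\<close>

lemma index_mult_mat_sum:
  assumes "A \<in> carrier_mat m n" "B \<in> carrier_mat n p" "a < m" "b < p"
  shows "(A * B) $$ (a, b) = (\<Sum>l<n. A $$ (a, l) * B $$ (l, b))"
  using assms by (simp add: scalar_prod_def atLeast0LessThan)

lemma index_append_rows:
  assumes "A \<in> carrier_mat m1 n" "B \<in> carrier_mat m2 n" "a < m1 + m2" "b < n"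
  shows "(A @\<^sub>r B) $$ (a, b) = (if a < m1 then A $$ (a, b) else B $$ (a - m1, b))"
  using assms by (simp add: append_rows_def)

lemma det_two_by_two:
  assumes "(A :: 'a::comm_ring_1 mat) \<in> carrier_mat 2 2"
  shows "det A = A $$ (0,0) * A $$ (1,1) - A $$ (0,1) * A $$ (1,0)"
proof -
  have "det A = (\<Sum>j<2. A $$ (0, j) * cofactor A 0 j)"
    using assms by (intro laplace_expansion_row) auto
  also have "\<dots> = A $$ (0, 0) * cofactor A 0 0 + A $$ (0, 1) * cofactor A 0 1"
    by (simp add: numeral_2_eq_2)
  also have "cofactor A 0 0 = A $$ (1,1)"
    unfolding cofactor_def using assms by (subst det_single) (auto simp: mat_delete_def)
  also have "cofactor A 0 1 = - A $$ (1,0)"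
    unfolding cofactor_def using assms by (subst det_single) (auto simp: mat_delete_def)
  finally show ?thesis by (simp add: algebra_simps)
qed

lemma col2_carrier [simp]: "col2 a b \<in> carrier_mat 2 1"
  and row2_carrier [simp]: "row2 a b \<in> carrier_mat 1 2"
  and dim_col2 [simp]: "dim_row (col2 a b) = 2" "dim_col (col2 a b) = 1"
  and dim_row2 [simp]: "dim_row (row2 a b) = 1" "dim_col (row2 a b) = 2"
  by (simp_all add: col2_def row2_def)

lemma row2_mult_index:
  assumes "M \<in> carrier_mat 2 c" "q < c"
  shows "(row2 a b * M) $$ (0, q) = a * M $$ (0, q) + b * M $$ (1, q)"
  using assms by (subst index_mult_mat_sum[OF row2_carrier]) (auto simp: numeral_2_eq_2 row2_def)

lemma row2_mult_transition:
  fixes f g f' g' :: "'a::comm_ring_1"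
  assumes A: "A \<in> carrier_mat 2 2" and trans: "col2 f g = A * col2 f' g'"
  shows "row2 g (- f) * A = det A \<cdot>\<^sub>m row2 g' (- f')"
proof -
  have col: "(A * col2 f' g') $$ (p,0) = A $$ (p,0) * f' + A $$ (p,1) * g'" if "p < 2" for p
    using that by (subst index_mult_mat_sum[OF A col2_carrier]) (auto simp: numeral_2_eq_2 col2_def)
  have "f = (A * col2 f' g') $$ (0,0)" "g = (A * col2 f' g') $$ (1,0)"
    unfolding trans[symmetric] by (simp_all add: col2_def)
  then have fg: "f = A $$ (0,0) * f' + A $$ (0,1) * g'" "g = A $$ (1,0) * f' + A $$ (1,1) * g'"
    using col[of 0] col[of 1] by simp_all
  have row: "(row2 g (- f) * A) $$ (0,q) = g * A $$ (0,q) - f * A $$ (1,q)" if "q < 2" for q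
    using row2_mult_index[OF A that] by simp
  have "g * A $$ (0,q) - f * A $$ (1,q) = det A * row2 g' (- f') $$ (0,q)" if "q < 2" for q
    using that unfolding det_two_by_two[OF A] fg by (cases q) (auto simp: row2_def algebra_simps)
  with row show ?thesis
    using A by (intro eq_matI) auto
qed

section \<open>The matrices M_i\<close>

text \<open>Row a of Delta n t is the unit row at column delta_index t a
  (rows and columns counted from 0, t from 1 as in the paper).\<close>
definition delta_index :: "nat \<Rightarrow> nat \<Rightarrow> nat" where
  "delta_index t a = (if a + 1 < t then a else a + 1)"

lemma delta_index_neq: "delta_index t a + 1 \<noteq> t"
  by (simp add: delta_index_def)

lemma delta_index_less: "a < n \<Longrightarrow> delta_index t a < n + 1"
  by (simp add: delta_index_def)

lemma delta_index_inj: "delta_index t a = delta_index t b \<longleftrightarrow> a = b"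
  by (auto simp: delta_index_def split: if_splits)

lemma Delta_carrier: "Delta (n + 1) t \<in> carrier_mat n (n + 1)"
  by (simp add: Delta_def)

lemma Delta_mult_index:
  assumes T: "(T :: 'a::semiring_1 mat) \<in> carrier_mat (n + 1) c" and "a < n" "q < c"
  shows "(Delta (n + 1) t * T) $$ (a, q) = T $$ (delta_index t a, q)"
proof -
  have "(Delta (n + 1) t * T) $$ (a, q) = (\<Sum>l<n + 1. Delta (n + 1) t $$ (a, l) * T $$ (l, q))"
    using assms by (intro index_mult_mat_sum[OF Delta_carrier T])
  also have "\<dots> = (\<Sum>l<n + 1. if l = delta_index t a then T $$ (l, q) else 0)"
    using assms by (intro sum.cong) (auto simp: Delta_def delta_index_def)
  also have "\<dots> = T $$ (delta_index t a, q)"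
    using assms by (simp add: delta_index_def)
  finally show ?thesis .
qed

lemma Tprime_carrier: "Tprime (n + 2) t s \<in> carrier_mat (n + 1) (n + 1)"
  by (simp add: Tprime_def)

lemma Tsecond_carrier: "Tsecond (n + 2) t f g \<in> carrier_mat 2 (n + 1)"
  by (simp add: Tsecond_def)

lemma Delta_Tprime_carrier: "Delta (n + 1) t * Tprime (n + 2) t s \<in> carrier_mat n (n + 1)"
  using Delta_carrier Tprime_carrier by (rule mult_carrier_mat)

lemma Mmat_eq: "Mmat (n + 2) t s f g = (Delta (n + 1) t * Tprime (n + 2) t s) @\<^sub>r Tsecond (n + 2) t f g"
  by (simp add: Mmat_def)

lemma Mmat_carrier: "Mmat (n + 2) t s f g \<in> carrier_mat (n + 2) (n + 1)"
  unfolding Mmat_eq by (rule carrier_append_rows[OF Delta_Tprime_carrier Tsecond_carrier])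

lemma Mmat_index_upper:
  assumes "l < n" "q < n + 1"
  shows "Mmat (n + 2) t s f g $$ (l, q) = Tprime (n + 2) t s $$ (delta_index t l, q)"
proof -
  have "Mmat (n + 2) t s f g $$ (l, q) = (Delta (n + 1) t * Tprime (n + 2) t s) $$ (l, q)"
    using assms unfolding Mmat_eq
    by (subst index_append_rows[OF Delta_Tprime_carrier Tsecond_carrier]) auto
  also have "\<dots> = Tprime (n + 2) t s $$ (delta_index t l, q)"
    by (rule Delta_mult_index[OF Tprime_carrier assms])
  finally show ?thesis .
qed

lemma Mmat_index_lower:
  assumes "p < 2" "q < n + 1"
  shows "Mmat (n + 2) t s f g $$ (n + p, q) = (if q + 1 = t then (if p = 0 then f else g) else 0)"
  using assms unfolding Mmat_eq
  by (subst index_append_rows[OF Delta_Tprime_carrier Tsecond_carrier]) (auto simp: Tsecond_def)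

lemma Mmat_unit_col:
  assumes "p < n" "l < n + 2" "t \<le> n + 1"
  shows "Mmat (n + 2) t s f g $$ (l, delta_index t p) = (if l = p then 1 else 0)"
proof (cases "l < n")
  case True
  then have "Mmat (n + 2) t s f g $$ (l, delta_index t p)
      = Tprime (n + 2) t s $$ (delta_index t l, delta_index t p)"
    using delta_index_less[OF assms(1)] by (rule Mmat_index_upper)
  then show ?thesis
    using True assms delta_index_neq[of t p]
    by (simp add: Tprime_def delta_index_inj) (simp add: delta_index_def)
next
  case False
  then obtain p' where p': "p' < 2" "l = n + p'"
    using assms(2) by (metis add_diff_inverse_nat add_less_cancel_left)
  with p' show ?thesis
    using assms(1) delta_index_less[OF assms(1)] delta_index_neq[of t p]
    by (simp only: Mmat_index_lower) simp
qed

lemma mult_Mmat_unit_col: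
  assumes Z: "Z \<in> carrier_mat m (n + 2)" and "a < m" "p < n" "t \<le> n + 1"
  shows "(Z * Mmat (n + 2) t s f g) $$ (a, delta_index t p) = Z $$ (a, p)"
proof -
  have "(Z * Mmat (n + 2) t s f g) $$ (a, delta_index t p)
      = (\<Sum>l<n + 2. Z $$ (a, l) * Mmat (n + 2) t s f g $$ (l, delta_index t p))"
    using assms delta_index_less by (intro index_mult_mat_sum[OF Z Mmat_carrier])
  also have "\<dots> = (\<Sum>l<n + 2. if l = p then Z $$ (a, l) else 0)"
    using assms by (intro sum.cong refl) (simp only: Mmat_unit_col lessThan_iff, simp)
  also have "\<dots> = Z $$ (a, p)"
    using assms by simp
  finally show ?thesis .
qed

lemma Mmat_annihilator:
  assumes D: "D \<in> carrier_mat m (n + 2)" and DM: "D * Mmat (n + 2) t s f g = 0\<^sub>m m (n + 1)"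
    and t: "1 \<le> t" "t \<le> n + 1" and a: "a < m"
  shows Mmat_annihilator_unit_cols: "\<And>p. p < n \<Longrightarrow> D $$ (a, p) = 0"
    and Mmat_annihilator_last_cols: "D $$ (a, n) * f + D $$ (a, n + 1) * g = 0"
proof -
  show zero: "D $$ (a, p) = 0" if "p < n" for p
    using DM mult_Mmat_unit_col[OF D a that t(2), of s f g] delta_index_less[OF that] a by simp
  have "0 = (D * Mmat (n + 2) t s f g) $$ (a, t - 1)"
    using DM a t by simp
  also have "\<dots> = (\<Sum>l<n + 2. D $$ (a, l) * Mmat (n + 2) t s f g $$ (l, t - 1))"
    using a t by (intro index_mult_mat_sum[OF D Mmat_carrier]) auto
  also have "\<dots> = D $$ (a, n) * Mmat (n + 2) t s f g $$ (n + 0, t - 1)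
      + D $$ (a, n + 1) * Mmat (n + 2) t s f g $$ (n + 1, t - 1)"
    by (simp add: numeral_2_eq_2 zero)
  also have "\<dots> = D $$ (a, n) * f + D $$ (a, n + 1) * g"
    using t by (simp only: Mmat_index_lower) simp
  finally show "D $$ (a, n) * f + D $$ (a, n + 1) * g = 0" ..
qed

lemma Mmat_transition_lower_left:
  fixes fi gi :: "'a::comm_ring_1"
  assumes P: "P \<in> carrier_mat n n" and S: "S \<in> carrier_mat 2 2" and R: "R \<in> carrier_mat 2 n"
    and trans: "Mmat (n + 2) ti si fi gi = four_block_mat P Q R S * Mmat (n + 2) tj sj fj gj"
    and tj: "tj \<le> n + 1"
  shows "row2 gi (- fi) * R = 0\<^sub>m 1 n"
proof -
  have Z: "four_block_mat P Q R S \<in> carrier_mat (n + 2) (n + 2)"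
    using four_block_carrier_mat[OF P S] .
  have R_entry: "R $$ (p, m) = (if delta_index tj m + 1 = ti then (if p = 0 then fi else gi) else 0)"
    if "p < 2" "m < n" for p m
  proof -
    have "R $$ (p, m) = four_block_mat P Q R S $$ (n + p, m)"
      using that P S R by simp
    also have "\<dots> = Mmat (n + 2) ti si fi gi $$ (n + p, delta_index tj m)"
      unfolding trans using that tj by (intro mult_Mmat_unit_col[OF Z, symmetric]) auto
    also have "\<dots> = (if delta_index tj m + 1 = ti then (if p = 0 then fi else gi) else 0)"
      using that delta_index_less by (intro Mmat_index_lower) auto
    finally show ?thesis .
  qed
  have "(row2 gi (- fi) * R) $$ (0, m) = 0" if "m < n" for m
  proof -
    have "(row2 gi (- fi) * R) $$ (0, m) = gi * R $$ (0, m) - fi * R $$ (1, m)"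
      using row2_mult_index[OF R that] by simp
    then show ?thesis
      using that by (simp add: R_entry mult.commute)
  qed
  then show ?thesis
    using R by (intro eq_matI) auto
qed

lemma Delta_colvec_append_rows_index:
  fixes \<beta> :: "nat \<Rightarrow> 'a::semiring_1"
  assumes "a < n + 2" "t \<le> n + 1"
  shows "((Delta (n + 1) t * colvec (n + 1) \<beta>) @\<^sub>r col2 (\<beta> t * f) (\<beta> t * g)) $$ (a, 0)
    = (if a < n then \<beta> (delta_index t a + 1) else if a = n then \<beta> t * f else \<beta> t * g)"
proof -
  have colvec: "colvec (n + 1) \<beta> \<in> carrier_mat (n + 1) 1"
    by (simp add: colvec_def)
  have upper: "(Delta (n + 1) t * colvec (n + 1) \<beta>) $$ (a, 0) = \<beta> (delta_index t a + 1)" if "a < n"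
    using Delta_mult_index[OF colvec that, of 0 t] delta_index_less[OF that] by (simp add: colvec_def)
  have "Delta (n + 1) t * colvec (n + 1) \<beta> \<in> carrier_mat n 1"
    using Delta_carrier colvec by (rule mult_carrier_mat)
  then show ?thesis
    using assms upper by (subst index_append_rows[OF _ col2_carrier]) (auto simp: col2_def)
qed

lemma column_row2_factorization:
  fixes \<beta> :: "nat \<Rightarrow> 'a::comm_ring_1"
  assumes t: "1 \<le> t" "t \<le> n + 1" and B: "B \<in> carrier_mat (n + 2) 2"
    and B_col0: "\<And>a. a < n + 2 \<Longrightarrow> B $$ (a, 0) = c a * g'"
    and B_col1: "\<And>a. a < n + 2 \<Longrightarrow> B $$ (a, 1) = - (c a * f')"
    and \<beta>_upper: "\<And>a. a < n \<Longrightarrow> \<beta> (delta_index t a + 1) = c a"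
    and \<beta>_lower: "\<beta> t * f = c n" "\<beta> t * g = c (n + 1)"
  shows "B = ((Delta (n + 1) t * colvec (n + 1) \<beta>) @\<^sub>r col2 (\<beta> t * f) (\<beta> t * g)) * row2 g' (- f')"
    (is "B = ?L * _")
proof -
  have L: "?L \<in> carrier_mat (n + 2) 1"
    using Delta_carrier[of n t] by (intro carrier_append_rows mult_carrier_mat) (auto simp: colvec_def)
  have L_index: "?L $$ (a, 0) = c a" if a: "a < n + 2" for a
  proof -
    consider "a < n" | "a = n" | "a = n + 1"
      using a by linarith
    then show ?thesis
      using Delta_colvec_append_rows_index[OF a t(2), of \<beta> f g] \<beta>_upper[of a] \<beta>_lower
      by cases auto
  qed
  show ?thesis
  proof (rule eq_matI)
    fix a q assume "a < dim_row (?L * row2 g' (- f'))" "q < dim_col (?L * row2 g' (- f'))"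
    then have a: "a < n + 2" and q: "q = 0 \<or> q = 1"
      using L by auto
    have "(?L * row2 g' (- f')) $$ (a, q) = ?L $$ (a, 0) * row2 g' (- f') $$ (0, q)"
      using a q by (subst index_mult_mat_sum[OF L row2_carrier]) auto
    then show "B $$ (a, q) = (?L * row2 g' (- f')) $$ (a, q)"
      using q L_index[OF a] B_col0[OF a] B_col1[OF a] by (auto simp: row2_def)
  qed (use B L in auto)
qed

section \<open>The cocycle defect of block matrices\<close>

lemma transition_defect_annihilates:
  fixes Zik Zij Zjk :: "'a::comm_ring mat"
  assumes Z: "Zik \<in> carrier_mat N N" "Zij \<in> carrier_mat N N" "Zjk \<in> carrier_mat N N"
    and Mk: "Mk \<in> carrier_mat N c"
    and ik: "Mi = Zik * Mk" and ij: "Mi = Zij * Mj" and jk: "Mj = Zjk * Mk"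
  shows "(Zik - Zij * Zjk) * Mk = 0\<^sub>m N c"
proof -
  have "(Zik - Zij * Zjk) * Mk = Zik * Mk - Zij * (Zjk * Mk)"
    using Z Mk by (simp add: minus_mult_distrib_mat[of _ N N])
  also have "\<dots> = 0\<^sub>m N c"
    unfolding ik[symmetric] jk[symmetric] ij[symmetric] using Z Mk ik by simp
  finally show ?thesis .
qed

lemma four_block_defect:
  fixes Pik Pij Pjk :: "'a::comm_ring mat"
  assumes ik: "Pik \<in> carrier_mat n1 n1" "Qik \<in> carrier_mat n1 n2" "Rik \<in> carrier_mat n2 n1" "Sik \<in> carrier_mat n2 n2"
    and ij: "Pij \<in> carrier_mat n1 n1" "Qij \<in> carrier_mat n1 n2" "Rij \<in> carrier_mat n2 n1" "Sij \<in> carrier_mat n2 n2"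
    and jk: "Pjk \<in> carrier_mat n1 n1" "Qjk \<in> carrier_mat n1 n2" "Rjk \<in> carrier_mat n2 n1" "Sjk \<in> carrier_mat n2 n2"
  shows "four_block_mat Pik Qik Rik Sik - four_block_mat Pij Qij Rij Sij * four_block_mat Pjk Qjk Rjk Sjk
    = four_block_mat (Pik - Pij * Pjk - Qij * Rjk) (Qik - Pij * Qjk - Qij * Sjk)
        (Rik - Rij * Pjk - Sij * Rjk) (Sik - Rij * Qjk - Sij * Sjk)"
proof -
  have "four_block_mat Pij Qij Rij Sij * four_block_mat Pjk Qjk Rjk Sjk
    = four_block_mat (Pij * Pjk + Qij * Rjk) (Pij * Qjk + Qij * Sjk)
        (Rij * Pjk + Sij * Rjk) (Rij * Qjk + Sij * Sjk)"
    using ij jk by (rule mult_four_block_mat)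
  then show ?thesis
    using ik ij jk by (intro eq_matI) (auto simp: diff_diff_eq)
qed

lemma index_append_cols_zero:
  "B \<in> carrier_mat m l \<Longrightarrow> a < m \<Longrightarrow> q < l \<Longrightarrow> append_cols (0\<^sub>m m n) B $$ (a, n + q) = B $$ (a, q)"
  by (simp add: append_cols_def)

lemma four_block_eq_append_cols:
  assumes P: "P \<in> carrier_mat m1 n1" and Q: "Q \<in> carrier_mat m1 n2"
    and R: "R \<in> carrier_mat m2 n1" and S: "S \<in> carrier_mat m2 n2"
    and left_zero: "\<And>a p. a < m1 + m2 \<Longrightarrow> p < n1 \<Longrightarrow> four_block_mat P Q R S $$ (a, p) = 0"
  shows "four_block_mat P Q R S = append_cols (0\<^sub>m (m1 + m2) n1) (Q @\<^sub>r S)"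
proof (rule eq_matI)
  fix a b assume "a < dim_row (append_cols (0\<^sub>m (m1 + m2) n1) (Q @\<^sub>r S))"
    and "b < dim_col (append_cols (0\<^sub>m (m1 + m2) n1) (Q @\<^sub>r S))"
  then show "four_block_mat P Q R S $$ (a, b) = append_cols (0\<^sub>m (m1 + m2) n1) (Q @\<^sub>r S) $$ (a, b)"
    using P Q R S left_zero[of a b] by (auto simp: append_cols_def append_rows_def)
qed (use P Q R S in \<open>auto simp: append_cols_def append_rows_def\<close>)

lemma smult_smult_mat: "a \<cdot>\<^sub>m (b \<cdot>\<^sub>m A) = (a * b :: 'a::semigroup_mult) \<cdot>\<^sub>m A"
  by (intro eq_matI) (auto simp: mult.assoc)

lemma lower_block_defect_koszul:
  fixes fi gi fj gj fk gk sik sij sjk :: "'a::comm_ring_1"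
  assumes A: "Aik \<in> carrier_mat 2 2" "Aij \<in> carrier_mat 2 2" "Ajk \<in> carrier_mat 2 2"
    and R: "Rij \<in> carrier_mat 2 n" and Q: "Qjk \<in> carrier_mat n 2"
    and ik: "col2 fi gi = Aik * col2 fk gk" and ij: "col2 fi gi = Aij * col2 fj gj"
    and jk: "col2 fj gj = Ajk * col2 fk gk"
    and R_ker: "row2 gi (- fi) * Rij = 0\<^sub>m 1 n"
    and scal: "sik * det Aik = sij * sjk * (det Aij * det Ajk)"
  shows "row2 gi (- fi) * (sik \<cdot>\<^sub>m Aik - Rij * Qjk - (sij \<cdot>\<^sub>m Aij) * (sjk \<cdot>\<^sub>m Ajk)) = 0\<^sub>m 1 2"
proof -
  let ?v = "row2 gi (- fi)" and ?w = "row2 gk (- fk)"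
  have "?v * (sik \<cdot>\<^sub>m Aik) = sik \<cdot>\<^sub>m (?v * Aik)"
    by (rule mult_smult_distrib[OF row2_carrier A(1)])
  also have "\<dots> = (sik * det Aik) \<cdot>\<^sub>m ?w"
    by (simp add: row2_mult_transition[OF A(1) ik] smult_smult_mat)
  finally have first: "?v * (sik \<cdot>\<^sub>m Aik) = (sik * det Aik) \<cdot>\<^sub>m ?w" .
  have "?v * (Rij * Qjk) = (?v * Rij) * Qjk"
    by (rule assoc_mult_mat[symmetric, OF row2_carrier R Q])
  then have middle: "?v * (Rij * Qjk) = 0\<^sub>m 1 2"
    using Q by (simp add: R_ker)
  have "(sij \<cdot>\<^sub>m Aij) * (sjk \<cdot>\<^sub>m Ajk) = (sij * sjk) \<cdot>\<^sub>m (Aij * Ajk)"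
    using A by (simp add: mult_smult_distrib[of _ 2 2] mult_smult_assoc_mat[of _ 2 2]
        smult_smult_mat mult.commute)
  then have "?v * ((sij \<cdot>\<^sub>m Aij) * (sjk \<cdot>\<^sub>m Ajk)) = (sij * sjk) \<cdot>\<^sub>m (?v * (Aij * Ajk))"
    using A by (simp add: mult_smult_distrib[OF row2_carrier mult_carrier_mat])
  also have "\<dots> = (sij * sjk) \<cdot>\<^sub>m ((?v * Aij) * Ajk)"
    by (simp add: assoc_mult_mat[OF row2_carrier A(2,3)])
  also have "\<dots> = (sij * sjk) \<cdot>\<^sub>m (det Aij \<cdot>\<^sub>m (row2 gj (- fj) * Ajk))"
    by (simp add: row2_mult_transition[OF A(2) ij] mult_smult_assoc_mat[OF row2_carrier A(3)])
  also have "\<dots> = (sik * det Aik) \<cdot>\<^sub>m ?w"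
    by (simp add: row2_mult_transition[OF A(3) jk] smult_smult_mat scal mult.assoc)
  finally have last: "?v * ((sij \<cdot>\<^sub>m Aij) * (sjk \<cdot>\<^sub>m Ajk)) = (sik * det Aik) \<cdot>\<^sub>m ?w" .
  have "?v * (sik \<cdot>\<^sub>m Aik - Rij * Qjk - (sij \<cdot>\<^sub>m Aij) * (sjk \<cdot>\<^sub>m Ajk))
      = ?v * (sik \<cdot>\<^sub>m Aik) - ?v * (Rij * Qjk) - ?v * ((sij \<cdot>\<^sub>m Aij) * (sjk \<cdot>\<^sub>m Ajk))"
  proof -
    have c: "sik \<cdot>\<^sub>m Aik \<in> carrier_mat 2 2" "Rij * Qjk \<in> carrier_mat 2 2"
      "(sij \<cdot>\<^sub>m Aij) * (sjk \<cdot>\<^sub>m Ajk) \<in> carrier_mat 2 2"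
      using A R Q by auto
    show ?thesis
      using mult_minus_distrib_mat[OF row2_carrier minus_carrier_mat[OF c(2)] c(3)]
        mult_minus_distrib_mat[OF row2_carrier c(1,2)] by simp
  qed
  also have "\<dots> = 0\<^sub>m 1 2"
    unfolding first middle last by (intro eq_matI) auto
  finally show ?thesis .
qed

lemma signed_transition_scalars_cocycle:
  fixes hij hjk hik u v w :: "'a::field"
  assumes "u \<noteq> 0" "v \<noteq> 0" "w \<noteq> 0" "hij * hjk = hik"
  shows "((-1) ^ tk * u) * ((-1) ^ ti * hik / u)
    = ((-1) ^ tj * v) * ((-1) ^ tk * w) * (((-1) ^ ti * hij / v) * ((-1) ^ tj * hjk / w))"
proof -
  have "((-1::'a) ^ tj) * (-1) ^ tj = 1"
    by (simp flip: power_mult_distrib)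
  then show ?thesis
    using assms by (simp add: field_simps)
qed

section \<open>Regular functions and regular sequences\<close>

text \<open>Hypothesis (b) of the setup: every syzygy of (f, g) over V is a multiple of the
  Koszul syzygy (g, -f).\<close>
definition koszul_exact :: "('x set \<Rightarrow> ('x \<Rightarrow> 'k::field) set) \<Rightarrow> 'x set \<Rightarrow> ('x \<Rightarrow> 'k) \<Rightarrow> ('x \<Rightarrow> 'k) \<Rightarrow> bool"
  where "koszul_exact Reg V f g \<longleftrightarrow> (\<forall>u\<in>Reg V. \<forall>v\<in>Reg V. (\<forall>x\<in>V. u x * f x = v x * g x) \<longrightarrow>
    (\<exists>w\<in>Reg V. \<forall>x\<in>V. u x = w x * g x \<and> v x = w x * f x))"

lemma reg_unit_nonzero: "reg_unit Reg V u \<Longrightarrow> x \<in> V \<Longrightarrow> u x \<noteq> 0"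
  unfolding reg_unit_def by fastforce

context
  fixes Aff :: "'x set set" and Reg :: "'x set \<Rightarrow> ('x \<Rightarrow> 'k::field) set"
  assumes regular: "regular_structure Aff Reg"
begin

lemma affine_Int: "V \<in> Aff \<Longrightarrow> W \<in> Aff \<Longrightarrow> V \<inter> W \<in> Aff"
  using regular unfolding regular_structure_def by meson

lemma reg_const: "V \<in> Aff \<Longrightarrow> (\<lambda>_. c) \<in> Reg V"
  using regular unfolding regular_structure_def by meson

lemma reg_add: "V \<in> Aff \<Longrightarrow> u \<in> Reg V \<Longrightarrow> v \<in> Reg V \<Longrightarrow> (\<lambda>x. u x + v x) \<in> Reg V"
  using regular unfolding regular_structure_def by meson

lemma reg_mult: "V \<in> Aff \<Longrightarrow> u \<in> Reg V \<Longrightarrow> v \<in> Reg V \<Longrightarrow> (\<lambda>x. u x * v x) \<in> Reg V"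
  using regular unfolding regular_structure_def by meson

lemma reg_minus: "V \<in> Aff \<Longrightarrow> u \<in> Reg V \<Longrightarrow> (\<lambda>x. - u x) \<in> Reg V"
  using regular unfolding regular_structure_def by meson

lemma reg_cong: "V \<in> Aff \<Longrightarrow> u \<in> Reg V \<Longrightarrow> (\<And>x. x \<in> V \<Longrightarrow> u' x = u x) \<Longrightarrow> u' \<in> Reg V"
  using regular unfolding regular_structure_def by meson

lemma reg_restrict: "V \<in> Aff \<Longrightarrow> W \<in> Aff \<Longrightarrow> V \<subseteq> W \<Longrightarrow> u \<in> Reg W \<Longrightarrow> u \<in> Reg V"
  using regular unfolding regular_structure_def by meson

lemma reg_diff: "V \<in> Aff \<Longrightarrow> u \<in> Reg V \<Longrightarrow> v \<in> Reg V \<Longrightarrow> (\<lambda>x. u x - v x) \<in> Reg V"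
  using reg_add[of V u "\<lambda>x. - v x"] reg_minus[of V v] by simp

lemma reg_sum:
  assumes V: "V \<in> Aff" and "finite L" "\<And>l. l \<in> L \<Longrightarrow> F l \<in> Reg V"
  shows "(\<lambda>x. \<Sum>l\<in>L. F l x) \<in> Reg V"
  using assms(2,3) by (induction L rule: finite_induct) (auto intro: reg_const[OF V] reg_add[OF V])

lemma reg_mat_restrict:
  "V \<in> Aff \<Longrightarrow> W \<in> Aff \<Longrightarrow> V \<subseteq> W \<Longrightarrow> reg_mat Reg W m n A \<Longrightarrow> reg_mat Reg V m n A"
  unfolding reg_mat_def using reg_restrict by blast

lemma reg_mat_diff:
  assumes V: "V \<in> Aff" and A: "reg_mat Reg V m n A" and B: "reg_mat Reg V m n B"
  shows "reg_mat Reg V m n (\<lambda>x. A x - B x)"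
proof -
  have carrier: "A x \<in> carrier_mat m n" "B x \<in> carrier_mat m n" if "x \<in> V" for x
    using A B that by (simp_all add: reg_mat_def)
  have "(\<lambda>x. (A x - B x) $$ (a, b)) \<in> Reg V" if "a < m" "b < n" for a b
  proof (rule reg_cong[OF V])
    show "(\<lambda>x. A x $$ (a, b) - B x $$ (a, b)) \<in> Reg V"
      using A B that by (intro reg_diff[OF V]) (simp_all add: reg_mat_def)
  next
    fix x assume "x \<in> V"
    then show "(A x - B x) $$ (a, b) = A x $$ (a, b) - B x $$ (a, b)"
      using carrier[OF \<open>x \<in> V\<close>] that by simp
  qed
  then show ?thesis
    using carrier by (auto simp: reg_mat_def intro!: minus_carrier_mat)
qed

lemma reg_mat_mult:
  assumes V: "V \<in> Aff" and A: "reg_mat Reg V m n A" and B: "reg_mat Reg V n p B"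
  shows "reg_mat Reg V m p (\<lambda>x. A x * B x)"
proof -
  have carrier: "A x \<in> carrier_mat m n" "B x \<in> carrier_mat n p" if "x \<in> V" for x
    using A B that by (simp_all add: reg_mat_def)
  have "(\<lambda>x. (A x * B x) $$ (a, b)) \<in> Reg V" if "a < m" "b < p" for a b
  proof (rule reg_cong[OF V])
    show "(\<lambda>x. \<Sum>l<n. A x $$ (a, l) * B x $$ (l, b)) \<in> Reg V"
      using A B that by (intro reg_sum[OF V] reg_mult[OF V]) (simp_all add: reg_mat_def)
  next
    fix x assume "x \<in> V"
    then show "(A x * B x) $$ (a, b) = (\<Sum>l<n. A x $$ (a, l) * B x $$ (l, b))"
      using carrier[OF \<open>x \<in> V\<close>] that by (intro index_mult_mat_sum)
  qed
  then show ?thesis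
    using carrier by (auto simp: reg_mat_def intro!: mult_carrier_mat)
qed

lemma koszul_exact_factor:
  assumes exact: "koszul_exact Reg V f g" and V: "V \<in> Aff" and uv: "u \<in> Reg V" "v \<in> Reg V"
    and syz: "\<forall>x\<in>V. u x * f x + v x * g x = 0"
  shows "\<exists>c\<in>Reg V. \<forall>x\<in>V. u x = c x * g x \<and> v x = - (c x * f x)"
proof -
  have "\<forall>x\<in>V. u x * f x = - v x * g x"
    using syz by (simp add: eq_neg_iff_add_eq_0)
  then obtain c where "c \<in> Reg V" "\<forall>x\<in>V. u x = c x * g x \<and> - v x = c x * f x"
    using exact[unfolded koszul_exact_def, rule_format, OF uv(1) reg_minus[OF V uv(2)]] by blast
  then show ?thesis
    by (metis minus_minus)
qed

lemma koszul_exact_annihilator: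
  assumes exact: "koszul_exact Reg V f g" and V: "V \<in> Aff" and a: "a \<in> Reg V"
    and ann: "\<And>x. x \<in> V \<Longrightarrow> a x * f x = 0 \<and> a x * g x = 0" and x: "x \<in> V"
  shows "a x = 0"
proof -
  have "\<forall>x\<in>V. a x * f x = 0 * g x"
    using ann by simp
  then obtain w where "\<forall>x\<in>V. a x = w x * g x"
    using exact[unfolded koszul_exact_def, rule_format, OF a reg_const[OF V, of 0]] by blast
  then have "a x * a x = w x * (a x * g x)"
    using x by (simp add: ac_simps)
  then show ?thesis
    using ann x by simp
qed

lemma koszul_exact_multiple:
  assumes V: "V \<in> Aff" and exact_i: "koszul_exact Reg V fi gi" and exact_k: "koszul_exact Reg V fk gk"
    and reg: "fi \<in> Reg V" "gi \<in> Reg V" "u \<in> Reg V" "v \<in> Reg V"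
    and ann: "\<And>x. x \<in> V \<Longrightarrow> (gi x * u x - fi x * v x) * fk x = 0 \<and> (gi x * u x - fi x * v x) * gk x = 0"
  shows "\<exists>w\<in>Reg V. \<forall>x\<in>V. v x = w x * gi x \<and> u x = w x * fi x"
proof -
  have "(\<lambda>x. gi x * u x - fi x * v x) \<in> Reg V"
    using reg by (intro reg_diff[OF V] reg_mult[OF V])
  then have "\<forall>x\<in>V. gi x * u x - fi x * v x = 0"
    using koszul_exact_annihilator[OF exact_k V _ ann] by blast
  then have "\<forall>x\<in>V. v x * fi x = u x * gi x"
    by (simp add: algebra_simps)
  then show ?thesis
    using exact_i[unfolded koszul_exact_def, rule_format, OF reg(4,3)] by blast
qed

lemma koszul_factorization:
  fixes B :: "'x \<Rightarrow> 'k mat"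
  assumes V: "V \<in> Aff" and exact_i: "koszul_exact Reg V fi gi" and exact_k: "koszul_exact Reg V fk gk"
    and fi: "fi \<in> Reg V" and gi: "gi \<in> Reg V" and t: "1 \<le> t" "t \<le> n + 1"
    and B: "reg_mat Reg V (n + 2) 2 B"
    and B_kernel: "\<And>x a. x \<in> V \<Longrightarrow> a < n + 2 \<Longrightarrow> B x $$ (a, 0) * fk x + B x $$ (a, 1) * gk x = 0"
    and B_lower: "\<And>x q. x \<in> V \<Longrightarrow> q < 2 \<Longrightarrow> gi x * B x $$ (n, q) = fi x * B x $$ (n + 1, q)"
  shows "\<exists>\<beta>. (\<forall>ta\<in>{1..n + 1}. \<beta> ta \<in> Reg V) \<and> (\<forall>x\<in>V. B x =
    ((Delta (n + 1) t * colvec (n + 1) (\<lambda>ta. \<beta> ta x)) @\<^sub>r col2 (\<beta> t x * fi x) (\<beta> t x * gi x))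
      * row2 (gk x) (- fk x))"
proof -
  have "\<forall>a<n + 2. \<exists>c\<in>Reg V. \<forall>x\<in>V. B x $$ (a, 0) = c x * gk x \<and> B x $$ (a, 1) = - (c x * fk x)"
    using B B_kernel unfolding reg_mat_def by (auto intro!: koszul_exact_factor[OF exact_k V])
  then obtain c where c_reg: "\<And>a. a < n + 2 \<Longrightarrow> c a \<in> Reg V"
    and c: "\<And>a x. a < n + 2 \<Longrightarrow> x \<in> V \<Longrightarrow> B x $$ (a, 0) = c a x * gk x \<and> B x $$ (a, 1) = - (c a x * fk x)"
    by metis
  have "(gi x * c n x - fi x * c (n + 1) x) * fk x = 0 \<and> (gi x * c n x - fi x * c (n + 1) x) * gk x = 0"
    if x: "x \<in> V" for x
  proof -
    have "gi x * B x $$ (n, 0) = fi x * B x $$ (n + 1, 0)" "gi x * B x $$ (n, 1) = fi x * B x $$ (n + 1, 1)"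
      using B_lower x by auto
    with c[OF _ x, of n] c[OF _ x, of "n + 1"] show ?thesis
      by (simp add: algebra_simps)
  qed
  then obtain w where w: "w \<in> Reg V" "\<forall>x\<in>V. c (n + 1) x = w x * gi x \<and> c n x = w x * fi x"
    using koszul_exact_multiple[OF V exact_i exact_k fi gi c_reg[of n] c_reg[of "n + 1"]] by auto
  define \<beta> where "\<beta> ta = (if ta = t then w else c (if ta < t then ta - 1 else ta - 2))" for ta
  have "\<beta> ta \<in> Reg V" if "ta \<in> {1..n + 1}" for ta
    using that w c_reg unfolding \<beta>_def by auto
  moreover have "B x = ((Delta (n + 1) t * colvec (n + 1) (\<lambda>ta. \<beta> ta x))
      @\<^sub>r col2 (\<beta> t x * fi x) (\<beta> t x * gi x)) * row2 (gk x) (- fk x)" if x: "x \<in> V" for x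
  proof (rule column_row2_factorization[OF t, where c = "\<lambda>a. c a x"])
    show "B x \<in> carrier_mat (n + 2) 2"
      using B x by (simp add: reg_mat_def)
  qed (use c x w in \<open>auto simp: \<beta>_def delta_index_def\<close>)
  ultimately show ?thesis
    by blast
qed

end

section \<open>The transition data of the theorem\<close>

text \<open>Only the hypotheses of the theorem that the proof uses.\<close>
locale transition_data =
  fixes Aff :: "'x set set"
    and Reg :: "'x set \<Rightarrow> ('x \<Rightarrow> 'k::field) set"
    and I :: "'i set" and U :: "'i \<Rightarrow> 'x set"
    and r :: nat
    and h :: "'i \<Rightarrow> 'i \<Rightarrow> 'x \<Rightarrow> 'k"
    and f g :: "'i \<Rightarrow> 'x \<Rightarrow> 'k"
    and A :: "'i \<Rightarrow> 'i \<Rightarrow> 'x \<Rightarrow> 'k mat"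
    and s :: "'i \<Rightarrow> nat \<Rightarrow> 'x \<Rightarrow> 'k"
    and t :: "'i \<Rightarrow> nat"
    and Z P Q R S :: "'i \<Rightarrow> 'i \<Rightarrow> 'x \<Rightarrow> 'k mat"
  assumes regular: "regular_structure Aff Reg"
    and cover_aff: "\<forall>i\<in>I. U i \<in> Aff"
    and h_cocycle: "\<forall>i\<in>I. \<forall>j\<in>I. \<forall>k\<in>I. \<forall>x\<in>U i \<inter> U j \<inter> U k. h i j x * h j k x = h i k x"
    and fg_reg: "\<forall>i\<in>I. f i \<in> Reg (U i) \<and> g i \<in> Reg (U i)"
    and fg_syz: "\<forall>i\<in>I. \<forall>V\<in>Aff. V \<subseteq> U i \<longrightarrow> (\<forall>u\<in>Reg V. \<forall>v\<in>Reg V.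
                   (\<forall>x\<in>V. u x * f i x = v x * g i x) \<longrightarrow>
                   (\<exists>w\<in>Reg V. \<forall>x\<in>V. u x = w x * g i x \<and> v x = w x * f i x))"
    and A_reg: "\<forall>i\<in>I. \<forall>j\<in>I. reg_mat Reg (U i \<inter> U j) 2 2 (A i j)"
    and A_trans: "\<forall>i\<in>I. \<forall>j\<in>I. \<forall>x\<in>U i \<inter> U j.
                   col2 (f i x) (g i x) = A i j x * col2 (f j x) (g j x)"
    and t_range: "\<forall>i\<in>I. t i \<in> {1..r-1}"
    and s_unit: "\<forall>i\<in>I. \<forall>j\<in>I. reg_unit Reg (U i \<inter> U j) (s j (t i))"
    and det_A: "\<forall>i\<in>I. \<forall>j\<in>I. \<forall>x\<in>U i \<inter> U j.
                   det (A i j x) = (-1) ^ t i * h i j x / s j (t i) x"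
    and Z_reg: "\<forall>i\<in>I. \<forall>j\<in>I. reg_mat Reg (U i \<inter> U j) r r (Z i j)"
    and blocks: "\<forall>i\<in>I. \<forall>j\<in>I. \<forall>x\<in>U i \<inter> U j.
                   P i j x \<in> carrier_mat (r - 2) (r - 2) \<and> Q i j x \<in> carrier_mat (r - 2) 2 \<and>
                   R i j x \<in> carrier_mat 2 (r - 2) \<and> S i j x \<in> carrier_mat 2 2 \<and>
                   Z i j x = four_block_mat (P i j x) (Q i j x) (R i j x) (S i j x)"
    and M_trans: "\<forall>i\<in>I. \<forall>j\<in>I. \<forall>x\<in>U i \<inter> U j.
                   Mmat r (t i) (\<lambda>ta. s i ta x) (f i x) (g i x)
                   = Z i j x * Mmat r (t j) (\<lambda>ta. s j ta x) (f j x) (g j x)"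
    and S_def: "\<forall>i\<in>I. \<forall>j\<in>I. \<forall>x\<in>U i \<inter> U j.
                   S i j x = ((-1) ^ t j * s j (t i) x) \<cdot>\<^sub>m A i j x"
begin

definition B :: "'i \<Rightarrow> 'i \<Rightarrow> 'i \<Rightarrow> 'x \<Rightarrow> 'k mat" where
  "B i j k x = (Q i k x - P i j x * Q j k x - Q i j x * S j k x)
     @\<^sub>r (S i k x - R i j x * Q j k x - S i j x * S j k x)"

lemma blocks_carrier:
  assumes "i \<in> I" "j \<in> I" "x \<in> U i \<inter> U j" "r = n + 2"
  shows "P i j x \<in> carrier_mat n n" "Q i j x \<in> carrier_mat n 2"
    "R i j x \<in> carrier_mat 2 n" "S i j x \<in> carrier_mat 2 2"
    "Z i j x = four_block_mat (P i j x) (Q i j x) (R i j x) (S i j x)"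
  using blocks assms by auto

lemma Z_carrier:
  assumes "i \<in> I" "j \<in> I" "x \<in> U i \<inter> U j" "r = n + 2"
  shows "Z i j x \<in> carrier_mat (n + 2) (n + 2)"
  using four_block_carrier_mat[OF blocks_carrier(1,4)[OF assms]] blocks_carrier(5)[OF assms] by simp

lemma defect_annihilates_Mmat:
  assumes ijk: "i \<in> I" "j \<in> I" "k \<in> I" and x: "x \<in> U i \<inter> U j \<inter> U k" and n: "r = n + 2"
  shows "(Z i k x - Z i j x * Z j k x) * Mmat (n + 2) (t k) (\<lambda>ta. s k ta x) (f k x) (g k x)
    = 0\<^sub>m (n + 2) (n + 1)"
proof -
  have xij: "x \<in> U i \<inter> U j" and xjk: "x \<in> U j \<inter> U k" and xik: "x \<in> U i \<inter> U k"
    using x by auto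
  show ?thesis
    using M_trans[rule_format, OF ijk(1,3) xik] M_trans[rule_format, OF ijk(1,2) xij]
      M_trans[rule_format, OF ijk(2,3) xjk]
    unfolding n by (rule transition_defect_annihilates[OF Z_carrier[OF ijk(1,3) xik n]
        Z_carrier[OF ijk(1,2) xij n] Z_carrier[OF ijk(2,3) xjk n] Mmat_carrier])
qed

lemma B_carrier:
  assumes "i \<in> I" "j \<in> I" "k \<in> I" "x \<in> U i \<inter> U j \<inter> U k" "r = n + 2"
  shows "B i j k x \<in> carrier_mat (n + 2) 2"
proof -
  have "x \<in> U i \<inter> U j" "x \<in> U j \<inter> U k" "x \<in> U i \<inter> U k"
    using assms by auto
  then show ?thesis
    using assms blocks_carrier[of i j x n] blocks_carrier[of j k x n] blocks_carrier[of i k x n]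
    unfolding B_def by (intro carrier_append_rows) auto
qed

lemma defect_eq_append_cols:
  assumes ijk: "i \<in> I" "j \<in> I" "k \<in> I" and x: "x \<in> U i \<inter> U j \<inter> U k" and n: "r = n + 2"
  shows "Z i k x - Z i j x * Z j k x = append_cols (0\<^sub>m (n + 2) n) (B i j k x)"
    and "a < n + 2 \<Longrightarrow> B i j k x $$ (a, 0) * f k x + B i j k x $$ (a, 1) * g k x = 0"
proof -
  have xij: "x \<in> U i \<inter> U j" and xjk: "x \<in> U j \<inter> U k" and xik: "x \<in> U i \<inter> U k"
    using x by auto
  note ij = blocks_carrier[OF ijk(1,2) xij n] and jk = blocks_carrier[OF ijk(2,3) xjk n]
    and ik = blocks_carrier[OF ijk(1,3) xik n]
  let ?D = "Z i k x - Z i j x * Z j k x"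
  have D_carrier: "?D \<in> carrier_mat (n + 2) (n + 2)"
    using Z_carrier[OF ijk(1,3) xik n] Z_carrier[OF ijk(1,2) xij n] Z_carrier[OF ijk(2,3) xjk n] by auto
  have t: "1 \<le> t k" "t k \<le> n + 1"
    using t_range ijk n by auto
  note annihilator = Mmat_annihilator[OF D_carrier defect_annihilates_Mmat[OF ijk x n] t]
  have D_blocks: "?D = four_block_mat (P i k x - P i j x * P j k x - Q i j x * R j k x)
      (Q i k x - P i j x * Q j k x - Q i j x * S j k x)
      (R i k x - R i j x * P j k x - S i j x * R j k x) (S i k x - R i j x * Q j k x - S i j x * S j k x)"
    (is "_ = four_block_mat ?P ?Q ?R ?S")
    unfolding ij(5) jk(5) ik(5) by (rule four_block_defect[OF ik(1-4) ij(1-4) jk(1-4)])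
  also have "\<dots> = append_cols (0\<^sub>m (n + 2) n) (B i j k x)"
    unfolding B_def
  proof (rule four_block_eq_append_cols)
    fix a p assume "a < n + 2" "p < n"
    then show "four_block_mat ?P ?Q ?R ?S $$ (a, p) = 0"
      unfolding D_blocks[symmetric] by (rule annihilator(1))
  qed (use ij jk ik in auto)
  finally show D: "?D = append_cols (0\<^sub>m (n + 2) n) (B i j k x)" .
  assume a: "a < n + 2"
  have "B i j k x $$ (a, q) = ?D $$ (a, n + q)" if "q < 2" for q
    unfolding D using index_append_cols_zero[OF B_carrier[OF ijk x n] a that] by simp
  then show "B i j k x $$ (a, 0) * f k x + B i j k x $$ (a, 1) * g k x = 0"
    using annihilator(2)[OF a] by simp
qed

lemma R_kernel:
  assumes ij: "i \<in> I" "j \<in> I" and x: "x \<in> U i \<inter> U j" and n: "r = n + 2"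
  shows "row2 (g i x) (- f i x) * R i j x = 0\<^sub>m 1 n"
proof -
  note carrier = blocks_carrier[OF ij x n]
  have "t j \<le> n + 1"
    using t_range ij n by auto
  then show ?thesis
    using M_trans[rule_format, OF ij x] unfolding n carrier(5)
    by (intro Mmat_transition_lower_left[OF carrier(1) carrier(4) carrier(3)])
qed

lemma signed_det_cocycle:
  assumes ijk: "i \<in> I" "j \<in> I" "k \<in> I" and x: "x \<in> U i \<inter> U j \<inter> U k"
  shows "((-1) ^ t k * s k (t i) x) * det (A i k x)
    = ((-1) ^ t j * s j (t i) x) * ((-1) ^ t k * s k (t j) x) * (det (A i j x) * det (A j k x))"
proof -
  have xij: "x \<in> U i \<inter> U j" and xjk: "x \<in> U j \<inter> U k" and xik: "x \<in> U i \<inter> U k"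
    using x by auto
  have nonzero: "s k (t i) x \<noteq> 0" "s j (t i) x \<noteq> 0" "s k (t j) x \<noteq> 0"
    using reg_unit_nonzero[OF s_unit[rule_format, OF ijk(1,3)] xik]
      reg_unit_nonzero[OF s_unit[rule_format, OF ijk(1,2)] xij]
      reg_unit_nonzero[OF s_unit[rule_format, OF ijk(2,3)] xjk] by blast+
  show ?thesis
    unfolding det_A[rule_format, OF ijk(1,3) xik] det_A[rule_format, OF ijk(1,2) xij]
      det_A[rule_format, OF ijk(2,3) xjk]
    by (rule signed_transition_scalars_cocycle[OF nonzero h_cocycle[rule_format, OF ijk x]])
qed

lemma B_lower:
  assumes ijk: "i \<in> I" "j \<in> I" "k \<in> I" and x: "x \<in> U i \<inter> U j \<inter> U k" and n: "r = n + 2"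
    and q: "q < 2"
  shows "g i x * B i j k x $$ (n, q) = f i x * B i j k x $$ (n + 1, q)"
proof -
  have xij: "x \<in> U i \<inter> U j" and xjk: "x \<in> U j \<inter> U k" and xik: "x \<in> U i \<inter> U k"
    using x by auto
  note ij = blocks_carrier[OF ijk(1,2) xij n] and jk = blocks_carrier[OF ijk(2,3) xjk n]
    and ik = blocks_carrier[OF ijk(1,3) xik n]
  have A: "A i k x \<in> carrier_mat 2 2" "A i j x \<in> carrier_mat 2 2" "A j k x \<in> carrier_mat 2 2"
    using A_reg ijk xij xjk xik by (auto simp: reg_mat_def)
  let ?S = "S i k x - R i j x * Q j k x - S i j x * S j k x"
  have "row2 (g i x) (- f i x) * ?S = 0\<^sub>m 1 2"
    unfolding S_def[rule_format, OF ijk(1,3) xik] S_def[rule_format, OF ijk(1,2) xij]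
      S_def[rule_format, OF ijk(2,3) xjk]
    by (rule lower_block_defect_koszul[OF A ij(3) jk(2) A_trans[rule_format, OF ijk(1,3) xik]
          A_trans[rule_format, OF ijk(1,2) xij] A_trans[rule_format, OF ijk(2,3) xjk] R_kernel[OF ijk(1,2) xij n] signed_det_cocycle[OF ijk x]])
  moreover have S: "?S \<in> carrier_mat 2 2"
    using ij jk ik by auto
  moreover have B_lower_block: "B i j k x $$ (n + p, q) = ?S $$ (p, q)" if "p < 2" for p
    unfolding B_def using ij jk ik that q by (subst index_append_rows[of _ n 2 _ 2]) auto
  ultimately show ?thesis
    using row2_mult_index[OF S q, of "g i x" "- f i x"] B_lower_block[of 0] B_lower_block[of 1] q
    by simp
qed

lemma Z_reg_on:
  assumes "a \<in> I" "b \<in> I" "V \<in> Aff" "V \<subseteq> U a \<inter> U b"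
  shows "reg_mat Reg V r r (Z a b)"
  using assms cover_aff affine_Int[OF regular] Z_reg
  by (intro reg_mat_restrict[OF regular, of V "U a \<inter> U b"]) auto

lemma B_regular:
  assumes ijk: "i \<in> I" "j \<in> I" "k \<in> I" and n: "r = n + 2"
  shows "reg_mat Reg (U i \<inter> U j \<inter> U k) (n + 2) 2 (B i j k)"
proof -
  let ?V = "U i \<inter> U j \<inter> U k"
  have V: "?V \<in> Aff"
    using ijk cover_aff affine_Int[OF regular] by auto
  have "reg_mat Reg ?V r r (\<lambda>x. Z i k x - Z i j x * Z j k x)"
    using ijk V by (intro reg_mat_diff[OF regular V] reg_mat_mult[OF regular V, where n = r] Z_reg_on) auto
  then have D: "(\<lambda>x. (Z i k x - Z i j x * Z j k x) $$ (a, n + q)) \<in> Reg ?V" if "a < n + 2" "q < 2" for a q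
    using that n by (simp add: reg_mat_def)
  have "(\<lambda>x. B i j k x $$ (a, q)) \<in> Reg ?V" if "a < n + 2" "q < 2" for a q
  proof (rule reg_cong[OF regular V D[OF that]])
    fix x assume x: "x \<in> ?V"
    show "B i j k x $$ (a, q) = (Z i k x - Z i j x * Z j k x) $$ (a, n + q)"
      unfolding defect_eq_append_cols(1)[OF ijk x n]
      using index_append_cols_zero[OF B_carrier[OF ijk x n] that] by simp
  qed
  then show ?thesis
    using B_carrier[OF ijk _ n] by (simp add: reg_mat_def)
qed

lemma koszul_exact_on:
  "i \<in> I \<Longrightarrow> V \<in> Aff \<Longrightarrow> V \<subseteq> U i \<Longrightarrow> koszul_exact Reg V (f i) (g i)"
  using fg_syz unfolding koszul_exact_def by blast


lemma B_factorization:
  assumes ijk: "i \<in> I" "j \<in> I" "k \<in> I" and n: "r = n + 2"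
  shows "\<exists>\<beta>. (\<forall>ta\<in>{1..n + 1}. \<beta> ta \<in> Reg (U i \<inter> U j \<inter> U k)) \<and> (\<forall>x\<in>U i \<inter> U j \<inter> U k.
    B i j k x = ((Delta (n + 1) (t i) * colvec (n + 1) (\<lambda>ta. \<beta> ta x))
      @\<^sub>r col2 (\<beta> (t i) x * f i x) (\<beta> (t i) x * g i x)) * row2 (g k x) (- f k x))"
proof -
  let ?V = "U i \<inter> U j \<inter> U k"
  have V: "?V \<in> Aff" "?V \<subseteq> U i" "?V \<subseteq> U k"
    using ijk cover_aff affine_Int[OF regular] by auto
  have fg_i: "f i \<in> Reg ?V" "g i \<in> Reg ?V"
    using fg_reg ijk cover_aff reg_restrict[OF regular V(1) _ V(2)] by auto
  have t: "1 \<le> t i" "t i \<le> n + 1"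
    using t_range ijk n by auto
  show ?thesis
    using koszul_exact_on[OF ijk(1) V(1,2)] koszul_exact_on[OF ijk(3) V(1,3)] fg_i t B_regular[OF ijk n]
      defect_eq_append_cols(2)[OF ijk _ n] B_lower[OF ijk _ n]
    by (intro koszul_factorization[OF regular V(1)])
qed

end

theorem corollary7:
  fixes Aff :: "'x set set"
    and Reg :: "'x set \<Rightarrow> ('x \<Rightarrow> 'k::alg_closed_field) set"
    and I :: "'i set" and U :: "'i \<Rightarrow> 'x set"
    and r :: nat
    and h :: "'i \<Rightarrow> 'i \<Rightarrow> 'x \<Rightarrow> 'k"
    and f g :: "'i \<Rightarrow> 'x \<Rightarrow> 'k"
    and A :: "'i \<Rightarrow> 'i \<Rightarrow> 'x \<Rightarrow> 'k mat"
    and s :: "'i \<Rightarrow> nat \<Rightarrow> 'x \<Rightarrow> 'k"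
    and t :: "'i \<Rightarrow> nat"
    and Z P Q R S :: "'i \<Rightarrow> 'i \<Rightarrow> 'x \<Rightarrow> 'k mat"
  assumes regular: "regular_structure Aff Reg"
    and cover_aff: "\<forall>i\<in>I. U i \<in> Aff"
    and r_ge: "r \<ge> 2"
    \<comment> \<open>(a) transition functions of L\<close>
    and h_unit: "\<forall>i\<in>I. \<forall>j\<in>I. reg_unit Reg (U i \<inter> U j) (h i j)"
    and h_cocycle: "\<forall>i\<in>I. \<forall>j\<in>I. \<forall>k\<in>I. \<forall>x\<in>U i \<inter> U j \<inter> U k. h i j x * h j k x = h i k x"
    \<comment> \<open>(b) local generators of the ideal of Y forming a regular sequence\<close>
    and fg_reg: "\<forall>i\<in>I. f i \<in> Reg (U i) \<and> g i \<in> Reg (U i)"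
    and fg_syz: "\<forall>i\<in>I. \<forall>V\<in>Aff. V \<subseteq> U i \<longrightarrow> (\<forall>u\<in>Reg V. \<forall>v\<in>Reg V.
                   (\<forall>x\<in>V. u x * f i x = v x * g i x) \<longrightarrow>
                   (\<exists>w\<in>Reg V. \<forall>x\<in>V. u x = w x * g i x \<and> v x = w x * f i x))"
    \<comment> \<open>(c) transition matrices\<close>
    and A_reg: "\<forall>i\<in>I. \<forall>j\<in>I. reg_mat Reg (U i \<inter> U j) 2 2 (A i j)"
    and A_trans: "\<forall>i\<in>I. \<forall>j\<in>I. \<forall>x\<in>U i \<inter> U j.
                   col2 (f i x) (g i x) = A i j x * col2 (f j x) (g j x)"
    \<comment> \<open>(d) local representatives of the sections s_t, compatible modulo the ideal of Y\<close>
    and s_reg: "\<forall>i\<in>I. \<forall>ta\<in>{1..r-1}. s i ta \<in> Reg (U i)"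
    and s_compat: "\<forall>i\<in>I. \<forall>j\<in>I. \<forall>ta\<in>{1..r-1}. \<exists>a\<in>Reg (U i \<inter> U j). \<exists>b\<in>Reg (U i \<inter> U j).
                   \<forall>x\<in>U i \<inter> U j. s i ta x - det (A i j x) / h i j x * s j ta x
                                     = a x * f i x + b x * g i x"
    \<comment> \<open>(e) normalisation\<close>
    and t_range: "\<forall>i\<in>I. t i \<in> {1..r-1}"
    and s_norm: "\<forall>i\<in>I. \<forall>x\<in>U i. s i (t i) x = (-1) ^ t i"
    and s_unit: "\<forall>i\<in>I. \<forall>j\<in>I. reg_unit Reg (U i \<inter> U j) (s j (t i))"
    and det_A: "\<forall>i\<in>I. \<forall>j\<in>I. \<forall>x\<in>U i \<inter> U j.
                   det (A i j x) = (-1) ^ t i * h i j x / s j (t i) x"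
    \<comment> \<open>the matrices Z_ij with their blocks\<close>
    and Z_reg: "\<forall>i\<in>I. \<forall>j\<in>I. reg_mat Reg (U i \<inter> U j) r r (Z i j)"
    and blocks: "\<forall>i\<in>I. \<forall>j\<in>I. \<forall>x\<in>U i \<inter> U j.
                   P i j x \<in> carrier_mat (r - 2) (r - 2) \<and> Q i j x \<in> carrier_mat (r - 2) 2 \<and>
                   R i j x \<in> carrier_mat 2 (r - 2) \<and> S i j x \<in> carrier_mat 2 2 \<and>
                   Z i j x = four_block_mat (P i j x) (Q i j x) (R i j x) (S i j x)"
    and P_def: "\<forall>i\<in>I. \<forall>j\<in>I. \<forall>x\<in>U i \<inter> U j.
                   P i j x = Delta (r - 1) (t i) * Tprime r (t i) (\<lambda>ta. s i ta x) * Delta' (r - 1) (t j)"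
    and M_trans: "\<forall>i\<in>I. \<forall>j\<in>I. \<forall>x\<in>U i \<inter> U j.
                   Mmat r (t i) (\<lambda>ta. s i ta x) (f i x) (g i x)
                   = Z i j x * Mmat r (t j) (\<lambda>ta. s j ta x) (f j x) (g j x)"
    and S_def: "\<forall>i\<in>I. \<forall>j\<in>I. \<forall>x\<in>U i \<inter> U j.
                   S i j x = ((-1) ^ t j * s j (t i) x) \<cdot>\<^sub>m A i j x"
  shows "\<forall>i\<in>I. \<forall>j\<in>I. \<forall>k\<in>I. \<exists>\<beta> :: nat \<Rightarrow> 'x \<Rightarrow> 'k.
           (\<forall>ta\<in>{1..r-1}. \<beta> ta \<in> Reg (U i \<inter> U j \<inter> U k)) \<and>
           (\<forall>x\<in>U i \<inter> U j \<inter> U k.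
              (let B = (Q i k x - P i j x * Q j k x - Q i j x * S j k x)
                       @\<^sub>r (S i k x - R i j x * Q j k x - S i j x * S j k x)
               in Z i k x - Z i j x * Z j k x = append_cols (0\<^sub>m r (r - 2)) B \<and>
                  B = ((Delta (r - 1) (t i) * colvec (r - 1) (\<lambda>ta. \<beta> ta x))
                         @\<^sub>r col2 (\<beta> (t i) x * f i x) (\<beta> (t i) x * g i x))
                      * row2 (g k x) (- f k x)))"
proof -
  interpret transition_data Aff Reg I U r h f g A s t Z P Q R S
    by unfold_locales (fact assms)+
  obtain n where n: "r = n + 2"
    using r_ge by (metis le_add_diff_inverse2)
  show ?thesis
    unfolding Let_def B_def[symmetric] n
    using defect_eq_append_cols(1)[OF _ _ _ _ n] B_factorization[OF _ _ _ n] by simp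
qed

end
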